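(* Let $n\ge1$ and let $(A_1,\dots,A_n)$ be a sequence of words from $\mathsf{W}_\omega$. Then there exists a unique $n$-bounded index collection $(s_1,\dots,s_m)$ that is maximal for $(A_1,\dots,A_n)$, and $m,s_1,\dots,s_m$ are determined by the following equations on $m,s_0,s_1,\dots$: $s_0=0$; if $s_k\neq n$ then $s_{k+1}=\min\{f\mid s_k<f\le n,\ \forall l\,(s_k<l\le n\to A_l\precsim A_f)\}$; if $s_k=n$ then $s_{k+1}=n$; and $m=\min\{f\ge1\mid s_f=n\}$.
   Context: Words are finite strings over $\mathbb{N}$; $\mathsf{W}_\omega$ is the set of all words, $\Lambda$ the empty word. For $k\in\mathbb{N}$, $\mathsf{S}_k$ is the set of words all of whose symbols are $\ge k$. Given a linear preorder $\precsim$ with $A\sim B$ iff $A\precsim B\wedge B\precsim A$ and $A\prec B$ iff $A\precsim B\wedge\neg B\precsim A$, a finite sequence $(A_1,\dots,A_p)$ is lexicographically not greater than $(B_1,\dots,B_q)$ iff either $p\le q$ and $A_i\sim B_i$ for all $i\le p$, or there is $s<\min(p,q)$ with $A_i\sim B_i$ for $i\le s$ and $A_{s+1}\prec B_{s+1}$. A lexicographically maximal subsequence of a finite sequence is a subsequence that is lexicographically not less than every subsequence. The linear preorder $\precsim$ on $\mathsf{W}_\omega$ is defined by recursion on (largest symbol of $AB$) $-$ (smallest symbol of $AB$): $\Lambda\precsim\Lambda$; if $AB$ is nonempty with minimal symbol $n$, write uniquely $A=A_1n\cdots nA_k$, $B=B_1n\cdots nB_l$ ($k,l\ge1$) with $A_i,B_j\in\mathsf{S}_{n+1}$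 (possibly empty); let $C,D$ be lexicographically maximal subsequences of $(A_1,\dots,A_k)$, $(B_1,\dots,B_l)$; then $A\precsim B$ iff $C$ is lexicographically not greater than $D$. An index collection is a strictly increasing finite sequence of positive integers; it is $n$-bounded if all its entries are $\le n$. An $n$-bounded index collection $(s_1,\dots,s_m)$ is maximal for $(A_1,\dots,A_n)$ if $(A_{s_1},\dots,A_{s_m})$ is a lexicographically maximal subsequence of $(A_1,\dots,A_n)$. *)

theory Defs
  imports Main "HOL-Library.Sublist"
begin

text \<open>Words are finite strings over nat, i.e. values of type nat list.\<close>

definition psim :: "('a \<Rightarrow> 'a \<Rightarrow> bool) \<Rightarrow> 'a \<Rightarrow> 'a \<Rightarrow> bool" where
  "psim R a b \<longleftrightarrow> R a b \<and> R b a"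

definition pless :: "('a \<Rightarrow> 'a \<Rightarrow> bool) \<Rightarrow> 'a \<Rightarrow> 'a \<Rightarrow> bool" where
  "pless R a b \<longleftrightarrow> R a b \<and> \<not> R b a"

text \<open>X is lexicographically not greater than Y (0-indexed transcription).\<close>
definition lexle :: "('a \<Rightarrow> 'a \<Rightarrow> bool) \<Rightarrow> 'a list \<Rightarrow> 'a list \<Rightarrow> bool" where
  "lexle R X Y \<longleftrightarrow>
     (length X \<le> length Y \<and> (\<forall>i<length X. psim R (X ! i) (Y ! i))) \<or>
     (\<exists>s < min (length X) (length Y). (\<forall>i<s. psim R (X ! i) (Y ! i)) \<and> pless R (X ! s) (Y ! s))"

definition lexmax :: "('a \<Rightarrow> 'a \<Rightarrow> bool) \<Rightarrow> 'a list \<Rightarrow> 'a list \<Rightarrow> bool" where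
  "lexmax R C Xs \<longleftrightarrow> subseq C Xs \<and> (\<forall>D. subseq D Xs \<longrightarrow> lexle R D C)"

fun splitw :: "nat \<Rightarrow> nat list \<Rightarrow> nat list list" where
  "splitw n [] = [[]]"
| "splitw n (x # xs) =
     (if x = n then [] # splitw n xs
      else (case splitw n xs of [] \<Rightarrow> [[x]] | y # ys \<Rightarrow> (x # y) # ys))"

definition wrange :: "nat list \<Rightarrow> nat" where
  "wrange W = (if W = [] then 0 else Max (set W) - Min (set W))"

text \<open>The recursion on the range, implemented with a fuel parameter. Starting with fuel
  Suc (wrange (A @ B)), every recursive call has fuel exceeding the range of its arguments,
  except calls at fuel 0, which only happen on empty words (where the answer is True).\<close>
fun wle_aux :: "nat \<Rightarrow> nat list \<Rightarrow> nat list \<Rightarrow> bool" where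
  "wle_aux 0 A B = True"
| "wle_aux (Suc d) A B =
     (if A @ B = [] then True
      else (let n = Min (set (A @ B)) in
            \<exists>C D. lexmax (wle_aux d) C (splitw n A) \<and> lexmax (wle_aux d) D (splitw n B)
                  \<and> lexle (wle_aux d) C D))"

definition wle :: "nat list \<Rightarrow> nat list \<Rightarrow> bool" where
  "wle A B = wle_aux (Suc (wrange (A @ B))) A B"

definition bounded_index_coll :: "nat \<Rightarrow> nat list \<Rightarrow> bool" where
  "bounded_index_coll n s \<longleftrightarrow> sorted_wrt (<) s \<and> (\<forall>x\<in>set s. 1 \<le> x \<and> x \<le> n)"

definition maximal_for :: "nat \<Rightarrow> (nat \<Rightarrow> nat list) \<Rightarrow> nat list \<Rightarrow> bool" where
  "maximal_for n A s \<longleftrightarrow> bounded_index_coll n s \<and>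
     lexmax wle (map A s) (map A [1..<Suc n])"

end

theory Submission
  imports Defs
begin

text \<open>
  The relation \<open>\<precsim>\<close> is a total preorder. Transitivity is not immediate, because the symbol at
  which two words are split depends on the pair being compared. We therefore compare words by
  splitting successively at the fixed symbols \<open>0, 1, \<dots>, K - 1\<close>; splitting at a symbol that
  does not occur yields a single block and changes nothing, so for all words with symbols below
  \<open>K\<close> this comparison agrees with \<open>\<precsim>\<close>, and it is a total preorder by induction on \<open>K\<close>.

  For a total preorder on the letters \<open>A\<^sub>1, \<dots>, A\<^sub>n\<close>, the greedy collection (always take the
  leftmost index of a largest remaining letter) is strictly maximal: every other index
  collection beyond the previous choice is lexicographically smaller and not equivalent. This is
  proved backwards along the greedy sequence; strictness at each stage is what makes the maximal
  collection unique, and it also pins down the sequence \<open>s\<^sub>k\<close> of the statement.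
\<close>

lemma set_subseq: "subseq xs ys \<Longrightarrow> set xs \<subseteq> set ys"
  by (auto elim: list_emb_set)

lemma sorted_wrt_subseq: "subseq xs ys \<Longrightarrow> sorted_wrt P ys \<Longrightarrow> sorted_wrt P xs"
  by (induction rule: list_emb.induct) (auto dest: set_subseq)

lemma subseq_map_iff: "subseq D (map f xs) \<longleftrightarrow> (\<exists>v. subseq v xs \<and> D = map f v)"
  by (metis nths_map subseq_conv_nths subseq_map)

lemma subseq_singleton_right: "subseq C [x] \<longleftrightarrow> C = [] \<or> C = [x]"
  by (cases C) (auto simp: subseq_singleton_left)

lemma subseq_upt_iff:
  "subseq v [Suc a..<Suc n] \<longleftrightarrow> sorted_wrt (<) v \<and> (\<forall>x\<in>set v. a < x \<and> x \<le> n)"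
proof
  assume sub: "subseq v [Suc a..<Suc n]"
  have "sorted_wrt (<) v"
    using sorted_wrt_subseq[OF sub sorted_wrt_upt] .
  moreover have "set v \<subseteq> {Suc a..<Suc n}"
    using set_subseq[OF sub] unfolding set_upt .
  ultimately show "sorted_wrt (<) v \<and> (\<forall>x\<in>set v. a < x \<and> x \<le> n)"
    by auto
next
  assume "sorted_wrt (<) v \<and> (\<forall>x\<in>set v. a < x \<and> x \<le> n)"
  then show "subseq v [Suc a..<Suc n]"
    by (intro sorted_subset_imp_subseq) (auto simp del: upt_Suc)
qed

section \<open>Total preorders and lexicographic comparison\<close>

definition total_preorder :: "('a \<Rightarrow> 'a \<Rightarrow> bool) \<Rightarrow> bool" where
  "total_preorder R \<longleftrightarrow> transp R \<and> (\<forall>x y. R x y \<or> R y x)"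

lemma total_preorder_total: "total_preorder R \<Longrightarrow> R x y \<or> R y x"
  by (simp add: total_preorder_def)

lemma total_preorder_refl: "total_preorder R \<Longrightarrow> R x x"
  using total_preorder_total by metis

lemma total_preorder_trans: "total_preorder R \<Longrightarrow> R x y \<Longrightarrow> R y z \<Longrightarrow> R x z"
  unfolding total_preorder_def by (metis transpD)

lemma total_preorder_finite_has_greatest:
  assumes R: "total_preorder R" and "finite S" "S \<noteq> {}"
  shows "\<exists>m\<in>S. \<forall>x\<in>S. R x m"
  using assms(2,3)
proof (induction S rule: finite_ne_induct)
  case (singleton x)
  then show ?case using total_preorder_refl[OF R] by auto
next
  case (insert x F)
  then obtain m where m: "m \<in> F" "\<forall>y\<in>F. R y m" by blast
  show ?case
  proof (cases "R x m")
    case True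
    with m show ?thesis by auto
  next
    case False
    then have "R m x" using total_preorder_total[OF R] by blast
    with m show ?thesis using total_preorder_trans[OF R] total_preorder_refl[OF R] by blast
  qed
qed

lemma lexle_Nil [simp]: "lexle R [] Y"
  by (simp add: lexle_def)

lemma lexle_Cons_Nil [simp]: "\<not> lexle R (x # X) []"
  by (simp add: lexle_def)

lemma lexle_Cons_Cons [simp]:
  "lexle R (x # X) (y # Y) \<longleftrightarrow> pless R x y \<or> psim R x y \<and> lexle R X Y"
  unfolding lexle_def
  by (simp add: All_less_Suc2 Ex_less_Suc2 del: min_Suc_Suc) (auto simp: pless_def psim_def)

lemma lexle_total: "total_preorder R \<Longrightarrow> lexle R X Y \<or> lexle R Y X"
proof (induction X arbitrary: Y)
  case (Cons x X)
  then show ?case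
    by (cases Y) (auto simp: pless_def psim_def dest: total_preorder_total[of R x])
qed simp

lemma lexle_trans:
  assumes R: "total_preorder R"
  shows "lexle R X Y \<Longrightarrow> lexle R Y Z \<Longrightarrow> lexle R X Z"
proof (induction X arbitrary: Y Z)
  case (Cons x X)
  then obtain y Y' z Z' where YZ: "Y = y # Y'" "Z = z # Z'"
    by (cases Y; cases Z) auto
  with Cons.prems have "R x y" "R y z"
    by (auto simp: pless_def psim_def)
  then have "R x z" by (rule total_preorder_trans[OF R])
  show ?case
  proof (cases "R z x")
    case True
    with \<open>R x y\<close> \<open>R y z\<close> have "R y x" "R z y"
      using total_preorder_trans[OF R] by blast+
    with Cons YZ \<open>R x z\<close> show ?thesis
      by (auto simp: pless_def psim_def)
  next
    case False
    with \<open>R x z\<close> YZ show ?thesis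
      by (simp add: pless_def)
  qed
qed simp

lemma total_preorder_lexle:
  assumes "total_preorder R"
  shows "total_preorder (lexle R)"
proof -
  have "transp (lexle R)"
    by (rule transpI) (rule lexle_trans[OF assms])
  then show ?thesis
    unfolding total_preorder_def using lexle_total[OF assms] by blast
qed

lemma lexle_refl: "total_preorder R \<Longrightarrow> lexle R X X"
  by (rule total_preorder_refl[OF total_preorder_lexle])

lemma lexle_Cons_self:
  assumes R: "total_preorder R"
  shows "\<forall>x\<in>set X. R x y \<Longrightarrow> lexle R X (y # X)"
proof (induction X arbitrary: y)
  case (Cons x X)
  show ?case
  proof (cases "R y x")
    case True
    with Cons.prems have "\<forall>x'\<in>set X. R x' x"
      using total_preorder_trans[OF R] by auto
    with Cons.IH True Cons.prems show ?thesis
      by (simp add: psim_def)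
  next
    case False
    with Cons.prems show ?thesis
      by (simp add: pless_def)
  qed
qed simp

lemma lexle_cong:
  assumes "\<forall>x\<in>S. \<forall>y\<in>S. R x y = R' x y" "set X \<subseteq> S" "set Y \<subseteq> S"
  shows "lexle R X Y = lexle R' X Y"
  using assms(2,3)
proof (induction X arbitrary: Y)
  case (Cons x X)
  then show ?case
    using assms(1) by (cases Y) (auto simp: pless_def psim_def)
qed simp

lemma lexmax_exists:
  assumes "total_preorder R"
  shows "\<exists>C. lexmax R C Xs"
proof -
  have "finite {D. subseq D Xs}"
    unfolding set_subseqs_eq[symmetric] by (rule List.finite_set)
  moreover have "[] \<in> {D. subseq D Xs}"
    by simp
  ultimately obtain C where "subseq C Xs" "\<forall>D. subseq D Xs \<longrightarrow> lexle R D C"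
    using total_preorder_finite_has_greatest[OF total_preorder_lexle[OF assms], of "{D. subseq D Xs}"]
    by auto
  then show ?thesis
    unfolding lexmax_def by blast
qed

lemma lexmax_cong:
  assumes "\<forall>x\<in>set Xs. \<forall>y\<in>set Xs. R x y = R' x y"
  shows "lexmax R C Xs = lexmax R' C Xs"
  unfolding lexmax_def using lexle_cong[OF assms] set_subseq by blast

lemma lexmax_singleton: "total_preorder R \<Longrightarrow> lexmax R C [x] \<longleftrightarrow> C = [x]"
  unfolding lexmax_def subseq_singleton_right using lexle_refl by fastforce

section \<open>Comparing words through their block decompositions\<close>

definition lexmax_le :: "('a \<Rightarrow> 'a \<Rightarrow> bool) \<Rightarrow> ('b \<Rightarrow> 'a list) \<Rightarrow> 'b \<Rightarrow> 'b \<Rightarrow> bool" where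
  "lexmax_le R F a b \<longleftrightarrow> (\<exists>C D. lexmax R C (F a) \<and> lexmax R D (F b) \<and> lexle R C D)"

lemma lexmax_le_iff:
  assumes R: "total_preorder R" and C: "lexmax R C (F a)" and D: "lexmax R D (F b)"
  shows "lexmax_le R F a b \<longleftrightarrow> lexle R C D"
proof
  assume "lexmax_le R F a b"
  then obtain C' D' where "lexmax R C' (F a)" "lexmax R D' (F b)" "lexle R C' D'"
    unfolding lexmax_le_def by blast
  with C D have "lexle R C C'" "lexle R D' D"
    unfolding lexmax_def by blast+
  with \<open>lexle R C' D'\<close> show "lexle R C D"
    using lexle_trans[OF R] by blast
qed (use C D in \<open>auto simp: lexmax_le_def\<close>)

lemma total_preorder_lexmax_le:
  assumes R: "total_preorder R"
  shows "total_preorder (lexmax_le R F)"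
proof -
  have lexmax_of: "\<exists>C. lexmax R C (F a)" for a
    by (rule lexmax_exists[OF R])
  have "transp (lexmax_le R F)"
  proof (rule transpI)
    fix a b c
    assume "lexmax_le R F a b" "lexmax_le R F b c"
    moreover obtain C D E where "lexmax R C (F a)" "lexmax R D (F b)" "lexmax R E (F c)"
      using lexmax_of by metis
    ultimately show "lexmax_le R F a c"
      using lexmax_le_iff[OF R] lexle_trans[OF R] by metis
  qed
  moreover have "lexmax_le R F a b \<or> lexmax_le R F b a" for a b
    using lexmax_of[of a] lexmax_of[of b] lexmax_le_iff[OF R] lexle_total[OF R] by metis
  ultimately show ?thesis
    unfolding total_preorder_def by blast
qed

lemma lexmax_le_cong:
  assumes "\<forall>P\<in>set (F a) \<union> set (F b). \<forall>Q\<in>set (F a) \<union> set (F b). R P Q = R' P Q"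
  shows "lexmax_le R F a b = lexmax_le R' F a b"
proof -
  have "lexmax R C (F a) = lexmax R' C (F a)" "lexmax R D (F b) = lexmax R' D (F b)" for C D
    using assms by (auto intro!: lexmax_cong)
  moreover have "lexle R C D = lexle R' C D" if "lexmax R C (F a)" "lexmax R D (F b)" for C D
    using that assms set_subseq unfolding lexmax_def by (intro lexle_cong) blast+
  ultimately show ?thesis
    unfolding lexmax_le_def by blast
qed

lemma lexmax_le_singleton:
  assumes "total_preorder R" "F a = [x]" "F b = [y]"
  shows "lexmax_le R F a b = R x y"
  using assms by (simp add: lexmax_le_def lexmax_singleton pless_def psim_def) blast

lemma concat_splitw: "concat (splitw n A) = filter (\<lambda>x. x \<noteq> n) A"
  by (induction A) (auto split: list.split)

lemma splitw_absent: "n \<notin> set A \<Longrightarrow> splitw n A = [A]"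
  by (induction A) auto

lemma set_splitw_block:
  assumes "P \<in> set (splitw n A)"
  shows "set P \<subseteq> set A - {n}"
proof -
  have "set P \<subseteq> set (concat (splitw n A))"
    using assms by auto
  also have "\<dots> = set A - {n}"
    unfolding concat_splitw by auto
  finally show ?thesis .
qed

text \<open>
  Unlike in \<open>wle_aux\<close>, the splitting symbols do not depend on the words compared.
\<close>
fun split_le :: "nat \<Rightarrow> nat \<Rightarrow> nat list \<Rightarrow> nat list \<Rightarrow> bool" where
  "split_le 0 n = (\<lambda>A B. True)"
| "split_le (Suc k) n = lexmax_le (split_le k (Suc n)) (splitw n)"

lemma total_preorder_split_le: "total_preorder (split_le k n)"
proof (induction k arbitrary: n)
  case 0
  show ?case by (simp add: total_preorder_def transp_def)
next
  case (Suc k)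
  then show ?case by (simp add: total_preorder_lexmax_le)
qed

lemma split_le_absent_symbol:
  assumes "\<forall>x\<in>set (A @ B). n < x"
  shows "split_le (Suc k) n A B = split_le k (Suc n) A B"
proof -
  have "splitw n A = [A]" "splitw n B = [B]"
    using assms by (auto intro!: splitw_absent)
  then show ?thesis
    by (simp add: lexmax_le_singleton[OF total_preorder_split_le])
qed

lemma split_le_add_depth:
  assumes "\<forall>x\<in>set (A @ B). n \<le> x \<and> x < n + k"
  shows "split_le (k + j) n A B = split_le k n A B"
  using assms
proof (induction k arbitrary: n A B)
  case 0
  then have "A @ B = []"
    by (metis add_0_right last_in_set leD)
  then show ?case
    using total_preorder_refl[OF total_preorder_split_le] by simp
next
  case (Suc k)
  have "split_le (k + j) (Suc n) P Q = split_le k (Suc n) P Q"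
    if "P \<in> set (splitw n A) \<union> set (splitw n B)" "Q \<in> set (splitw n A) \<union> set (splitw n B)" for P Q
  proof (rule Suc.IH)
    show "\<forall>x\<in>set (P @ Q). Suc n \<le> x \<and> x < Suc n + k"
    proof
      fix x
      assume "x \<in> set (P @ Q)"
      then have "x \<in> set (A @ B)" "x \<noteq> n"
        using that set_splitw_block[of _ n A] set_splitw_block[of _ n B] by auto
      with Suc.prems show "Suc n \<le> x \<and> x < Suc n + k"
        by fastforce
    qed
  qed
  then have "lexmax_le (split_le (k + j) (Suc n)) (splitw n) A B =
             lexmax_le (split_le k (Suc n)) (splitw n) A B"
    by (intro lexmax_le_cong) blast
  then show ?case
    by simp
qed

lemma split_le_base_zero:
  assumes "\<forall>x\<in>set (A @ B). n \<le> x"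
  shows "split_le k n A B = split_le (k + n) 0 A B"
  using assms
proof (induction n arbitrary: k)
  case (Suc n)
  then have "\<forall>x\<in>set (A @ B). n < x"
    by (simp add: Suc_le_eq)
  then have "split_le k (Suc n) A B = split_le (Suc k) n A B"
    by (rule split_le_absent_symbol[symmetric])
  also have "\<dots> = split_le (Suc k + n) 0 A B"
    using \<open>\<forall>x\<in>set (A @ B). n < x\<close> by (intro Suc.IH) (simp add: less_imp_le)
  finally show ?case
    by (metis add_Suc add_Suc_right)
qed simp

lemma split_le_normal_form:
  assumes range: "\<forall>x\<in>set (A @ B). n \<le> x \<and> x < n + k" and bound: "\<forall>x\<in>set (A @ B). x < K"
  shows "split_le k n A B = split_le K 0 A B"
proof -
  define c where "c = min K (k + n)"
  have "\<forall>x\<in>set (A @ B). 0 \<le> x \<and> x < 0 + c"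
  proof
    fix x
    assume "x \<in> set (A @ B)"
    with range bound have "x < k + n" "x < K" by fastforce+
    then show "0 \<le> x \<and> x < 0 + c" by (simp add: c_def)
  qed
  then have depth: "split_le (c + j) 0 A B = split_le c 0 A B" for j
    by (rule split_le_add_depth)
  have "split_le k n A B = split_le (k + n) 0 A B"
    by (rule split_le_base_zero) (use range in blast)
  also have "\<dots> = split_le c 0 A B"
    using depth[of "k + n - c"] by (simp add: c_def)
  also have "\<dots> = split_le K 0 A B"
    using depth[of "K - c"] by (simp add: c_def)
  finally show ?thesis .
qed

lemma le_Min_plus_wrange: "x \<in> set W \<Longrightarrow> x \<le> Min (set W) + wrange W"
  using Min_le[OF finite_set, of x W] Max_ge[OF finite_set, of x W] by (auto simp: wrange_def)

lemma wle_aux_eq_split_le: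
  assumes "\<forall>x\<in>set (A @ B). lo \<le> x \<and> x < lo + d" and "\<forall>x\<in>set (A @ B). x < K"
  shows "wle_aux d A B = split_le K 0 A B"
  using assms
proof (induction d arbitrary: lo A B)
  case 0
  then have "A @ B = []"
    by (metis add_0_right last_in_set leD)
  then show ?case
    using total_preorder_refl[OF total_preorder_split_le] by simp
next
  case (Suc d)
  show ?case
  proof (cases "A @ B = []")
    case True
    then show ?thesis
      using total_preorder_refl[OF total_preorder_split_le] by simp
  next
    case False
    define m where "m = Min (set (A @ B))"
    have "lo \<le> m"
      using False Suc.prems(1) by (simp add: m_def)
    have range: "\<forall>x\<in>set (A @ B). m \<le> x \<and> x < m + Suc d"
    proof
      fix x
      assume x: "x \<in> set (A @ B)"
      then have "m \<le> x"
        unfolding m_def by (rule Min_le[OF finite_set])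
      moreover have "x < lo + Suc d"
        using x Suc.prems(1) by blast
      ultimately show "m \<le> x \<and> x < m + Suc d"
        using \<open>lo \<le> m\<close> by linarith
    qed
    have blocks_eq: "wle_aux d P Q = split_le d (Suc m) P Q"
      if "P \<in> set (splitw m A) \<union> set (splitw m B)" "Q \<in> set (splitw m A) \<union> set (splitw m B)" for P Q
    proof -
      have "\<forall>x\<in>set (P @ Q). Suc m \<le> x \<and> x < Suc m + d"
      proof
        fix x
        assume "x \<in> set (P @ Q)"
        then have "x \<in> set (A @ B)" "x \<noteq> m"
          using that set_splitw_block[of _ m A] set_splitw_block[of _ m B] by auto
        with range show "Suc m \<le> x \<and> x < Suc m + d"
          by fastforce
      qed
      moreover have "\<forall>x\<in>set (P @ Q). x < K"
        using that set_splitw_block[of _ m A] set_splitw_block[of _ m B] Suc.prems(2) by fastforce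
      ultimately show ?thesis
        using Suc.IH split_le_normal_form by metis
    qed
    have "wle_aux (Suc d) A B = lexmax_le (wle_aux d) (splitw m) A B"
      using False by (auto simp: lexmax_le_def Let_def m_def)
    also have "\<dots> = lexmax_le (split_le d (Suc m)) (splitw m) A B"
      using blocks_eq by (intro lexmax_le_cong) blast
    also have "\<dots> = split_le (Suc d) m A B"
      by simp
    also have "\<dots> = split_le K 0 A B"
      using range Suc.prems(2) by (rule split_le_normal_form)
    finally show ?thesis .
  qed
qed

lemma wle_eq_split_le:
  assumes "\<forall>x\<in>set (A @ B). x < K"
  shows "wle A B = split_le K 0 A B"
proof -
  have "\<forall>x\<in>set (A @ B). Min (set (A @ B)) \<le> x \<and> x < Min (set (A @ B)) + Suc (wrange (A @ B))"
    using le_Min_plus_wrange[of _ "A @ B"] by (auto intro: le_imp_less_Suc simp del: set_append)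
  then show ?thesis
    unfolding wle_def using assms by (rule wle_aux_eq_split_le)
qed

lemma total_preorder_wle: "total_preorder wle"
proof -
  have "\<exists>K. \<forall>a\<in>set W. a < K" for W :: "nat list"
    using finite_nat_set_iff_bounded by blast
  then obtain K :: "nat list \<Rightarrow> nat" where K: "\<forall>a\<in>set W. a < K W" for W
    by metis
  have "transp wle"
  proof (rule transpI)
    fix x y z
    have eq: "wle A B = split_le (K (x @ y @ z)) 0 A B" if "set (A @ B) \<subseteq> set (x @ y @ z)" for A B
      using that K[of "x @ y @ z"] by (intro wle_eq_split_le) blast
    assume "wle x y" "wle y z"
    then have "split_le (K (x @ y @ z)) 0 x y" "split_le (K (x @ y @ z)) 0 y z"
      using eq[of x y] eq[of y z] by auto
    then have "split_le (K (x @ y @ z)) 0 x z"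
      by (rule total_preorder_trans[OF total_preorder_split_le])
    then show "wle x z"
      using eq[of x z] by auto
  qed
  moreover have "wle x y \<or> wle y x" for x y
  proof -
    have eq: "wle A B = split_le (K (x @ y)) 0 A B" if "set (A @ B) \<subseteq> set (x @ y)" for A B
      using that K[of "x @ y"] by (intro wle_eq_split_le) blast
    then show ?thesis
      using total_preorder_total[OF total_preorder_split_le] by auto
  qed
  ultimately show ?thesis
    unfolding total_preorder_def by blast
qed

section \<open>The greedy maximal index collection\<close>

locale greedy_max =
  fixes R :: "'a \<Rightarrow> 'a \<Rightarrow> bool" and A :: "nat \<Rightarrow> 'a" and n :: nat
  assumes total: "total_preorder R"
begin

definition index_coll_above :: "nat \<Rightarrow> nat list \<Rightarrow> bool" where
  "index_coll_above a u \<longleftrightarrow> sorted_wrt (<) u \<and> (\<forall>x\<in>set u. a < x \<and> x \<le> n)"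

definition strict_max_above :: "nat \<Rightarrow> nat list \<Rightarrow> bool" where
  "strict_max_above a s \<longleftrightarrow> index_coll_above a s \<and>
     (\<forall>u. index_coll_above a u \<longrightarrow>
        lexle R (map A u) (map A s) \<and> (lexle R (map A s) (map A u) \<longrightarrow> u = s))"

definition greedy_step :: "nat \<Rightarrow> nat" where
  "greedy_step a = Min {f. a < f \<and> f \<le> n \<and> (\<forall>l. a < l \<and> l \<le> n \<longrightarrow> R (A l) (A f))}"

lemma greedy_step_mem:
  assumes "a < n"
  shows "greedy_step a \<in> {f. a < f \<and> f \<le> n \<and> (\<forall>l. a < l \<and> l \<le> n \<longrightarrow> R (A l) (A f))}"
    (is "_ \<in> ?S")
proof -
  have "finite ?S"
    by (rule finite_subset[of _ "{..n}"]) auto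
  moreover obtain m where "m \<in> {a<..n}" "\<forall>l\<in>{a<..n}. R (A l) (A m)"
    using total_preorder_finite_has_greatest[of "\<lambda>i j. R (A i) (A j)" "{a<..n}"] total assms
    unfolding total_preorder_def transp_def by auto
  then have "?S \<noteq> {}"
    by auto
  ultimately show ?thesis
    unfolding greedy_step_def by (rule Min_in)
qed

lemma greedy_step_bounds: "a < n \<Longrightarrow> a < greedy_step a \<and> greedy_step a \<le> n"
  using greedy_step_mem by blast

lemma greedy_step_greatest: "a < n \<Longrightarrow> a < l \<Longrightarrow> l \<le> n \<Longrightarrow> R (A l) (A (greedy_step a))"
  using greedy_step_mem by blast

lemma greedy_step_least:
  assumes "a < n" "a < l" "l \<le> n" "R (A (greedy_step a)) (A l)"
  shows "greedy_step a \<le> l"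
proof -
  have "\<forall>l'. a < l' \<and> l' \<le> n \<longrightarrow> R (A l') (A l)"
    using assms greedy_step_greatest total_preorder_trans[OF total] by blast
  with assms(2,3) show ?thesis
    unfolding greedy_step_def by (intro Min_le) (auto intro: finite_subset[of _ "{..n}"])
qed

lemma strict_max_above_unique: "strict_max_above a s \<Longrightarrow> strict_max_above a s' \<Longrightarrow> s' = s"
  unfolding strict_max_above_def by blast

lemma strict_max_above_n: "strict_max_above n []"
proof -
  have "u = []" if "index_coll_above n u" for u
    using that by (cases u) (auto simp: index_coll_above_def)
  moreover have "index_coll_above n []"
    by (simp add: index_coll_above_def)
  ultimately show ?thesis
    unfolding strict_max_above_def by fastforce
qed

text \<open>
  A competitor \<open>u1 # T\<close> with a later head equivalent to the greedy choice would be a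
  collection above \<open>greedy_step a\<close> that is not below \<open>T\<close>.
\<close>
lemma later_head_strictly_smaller:
  assumes "a < n" and T: "strict_max_above (greedy_step a) T"
    and "greedy_step a < u1" "u1 \<le> n" and u1: "index_coll_above u1 T"
  shows "\<not> R (A (greedy_step a)) (A u1)"
proof
  assume equiv: "R (A (greedy_step a)) (A u1)"
  have "index_coll_above (greedy_step a) (u1 # T)"
    using u1 \<open>greedy_step a < u1\<close> \<open>u1 \<le> n\<close> unfolding index_coll_above_def by auto
  moreover have "\<forall>x\<in>set T. R (A x) (A u1)"
  proof
    fix x
    assume "x \<in> set T"
    with T greedy_step_bounds[OF \<open>a < n\<close>] have "a < x" "x \<le> n"
      unfolding strict_max_above_def index_coll_above_def by auto
    then have "R (A x) (A (greedy_step a))"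
      by (rule greedy_step_greatest[OF \<open>a < n\<close>])
    from this equiv show "R (A x) (A u1)"
      by (rule total_preorder_trans[OF total])
  qed
  then have "lexle R (map A T) (map A (u1 # T))"
    using lexle_Cons_self[OF total] by simp
  ultimately show False
    using T unfolding strict_max_above_def by fastforce
qed

lemma strict_max_above_Cons:
  assumes "a < n" and T: "strict_max_above (greedy_step a) T"
  shows "strict_max_above a (greedy_step a # T)"
proof -
  define f where "f = greedy_step a"
  have f: "a < f" "f \<le> n"
    using greedy_step_bounds[OF \<open>a < n\<close>] by (simp_all add: f_def)
  have T_coll: "index_coll_above f T"
    using T by (simp add: strict_max_above_def f_def)
  have "index_coll_above a (f # T)"
    using T_coll f unfolding index_coll_above_def by auto
  moreover have "lexle R (map A u) (map A (f # T)) \<and>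
      (lexle R (map A (f # T)) (map A u) \<longrightarrow> u = f # T)" if u: "index_coll_above a u" for u
  proof (cases u)
    case (Cons u1 u')
    have u1: "a < u1" "u1 \<le> n" and u': "index_coll_above u1 u'"
      using u unfolding Cons index_coll_above_def by auto
    have "R (A u1) (A f)"
      unfolding f_def using greedy_step_greatest[OF \<open>a < n\<close> u1] .
    show ?thesis
    proof (cases "R (A f) (A u1)")
      case False
      with \<open>R (A u1) (A f)\<close> show ?thesis
        unfolding Cons by (simp add: pless_def psim_def)
    next
      case True
      then have "f \<le> u1"
        unfolding f_def using greedy_step_least[OF \<open>a < n\<close> u1] by simp
      with u' have "index_coll_above f u'"
        unfolding index_coll_above_def by auto
      with T have u'_le: "lexle R (map A u') (map A T)"
        and u'_eq: "lexle R (map A T) (map A u') \<Longrightarrow> u' = T"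
        unfolding strict_max_above_def f_def by blast+
      have equiv: "psim R (A u1) (A f)" "\<not> pless R (A f) (A u1)"
        using True \<open>R (A u1) (A f)\<close> by (simp_all add: psim_def pless_def)
      have "u1 = f" if "u' = T"
      proof (rule ccontr)
        assume "u1 \<noteq> f"
        with \<open>f \<le> u1\<close> u' \<open>u' = T\<close> have "f < u1" "index_coll_above u1 T"
          by simp_all
        with True show False
          using later_head_strictly_smaller[OF \<open>a < n\<close> T] u1 unfolding f_def by blast
      qed
      with u'_le u'_eq equiv show ?thesis
        unfolding Cons by auto
    qed
  qed simp
  ultimately show ?thesis
    unfolding strict_max_above_def f_def by blast
qed

lemma strict_max_above_exists: "a \<le> n \<Longrightarrow> \<exists>s. strict_max_above a s"
proof (induction "n - a" arbitrary: a rule: less_induct)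
  case less
  show ?case
  proof (cases "a = n")
    case True
    then show ?thesis
      using strict_max_above_n by blast
  next
    case False
    with less.prems have "a < n" by simp
    with less.hyps obtain T where "strict_max_above (greedy_step a) T"
      using greedy_step_bounds by (metis diff_less_mono2)
    then show ?thesis
      using strict_max_above_Cons[OF \<open>a < n\<close>] by blast
  qed
qed

definition greedy_run :: "(nat \<Rightarrow> nat) \<Rightarrow> bool" where
  "greedy_run t \<longleftrightarrow> (\<forall>k. t (Suc k) = (if t k \<noteq> n then greedy_step (t k) else n))"

lemma greedy_run_bounds:
  assumes "greedy_run t" "t 0 \<le> n"
  shows "t k \<le> n \<and> (t k = n \<or> t 0 + k \<le> t k)"
proof (induction k)
  case (Suc k)
  show ?case
  proof (cases "t k = n")
    case False
    with Suc.IH have "t k < n" by simp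
    with False assms(1) greedy_step_bounds[of "t k"] Suc.IH show ?thesis
      by (simp add: greedy_run_def)
  qed (use assms(1) in \<open>simp add: greedy_run_def\<close>)
qed (simp add: assms(2))

lemma greedy_run_reaches_n: "greedy_run t \<Longrightarrow> t 0 \<le> n \<Longrightarrow> t n = n"
  using greedy_run_bounds[of t n] by auto

lemma greedy_run_strict_max_upto:
  assumes "greedy_run t" "t 0 \<le> n" "t m = n" "\<forall>j<m. t j \<noteq> n"
  shows "strict_max_above (t 0) (map t [1..<Suc m])"
  using assms
proof (induction m arbitrary: t)
  case 0
  then show ?case
    using strict_max_above_n by simp
next
  case (Suc m)
  then have "t 0 < n" "t 1 = greedy_step (t 0)"
    by (auto simp: greedy_run_def)
  moreover have "strict_max_above (t 1) (map (\<lambda>k. t (Suc k)) [1..<Suc m])"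
    using Suc.IH[of "\<lambda>k. t (Suc k)"] Suc.prems \<open>t 0 < n\<close> \<open>t 1 = greedy_step (t 0)\<close>
      greedy_step_bounds[of "t 0"] by (simp add: greedy_run_def)
  ultimately have "strict_max_above (t 0) (t 1 # map (\<lambda>k. t (Suc k)) [1..<Suc m])"
    using strict_max_above_Cons by simp
  moreover have "[1..<Suc (Suc m)] = 1 # map Suc [1..<Suc m]"
    by (simp add: map_Suc_upt upt_conv_Cons del: upt_Suc)
  ultimately show ?case
    by (simp add: comp_def del: upt_Suc)
qed

lemma greedy_run_strict_max:
  assumes "greedy_run t" "t 0 < n"
  shows "\<exists>f\<ge>1. t f = n"
    and "strict_max_above (t 0) (map t [1..<Suc (LEAST f. 1 \<le> f \<and> t f = n)])"
proof -
  show ex: "\<exists>f\<ge>1. t f = n"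
    using greedy_run_reaches_n[OF assms(1)] assms(2) by (metis less_imp_le less_one not_le)
  define m where "m = (LEAST f. 1 \<le> f \<and> t f = n)"
  have "t m = n"
    using LeastI_ex[OF ex[simplified Bex_def[symmetric]]] unfolding m_def by auto
  moreover have "\<forall>j<m. t j \<noteq> n"
    using not_less_Least[of _ "\<lambda>f. 1 \<le> f \<and> t f = n"] assms(2) unfolding m_def
    by (metis less_one not_le less_irrefl)
  ultimately show "strict_max_above (t 0) (map t [1..<Suc m])"
    by (intro greedy_run_strict_max_upto) (use assms in auto)
qed

lemma lexmax_index_coll_iff:
  assumes s: "strict_max_above 0 s"
  shows "bounded_index_coll n u \<and> lexmax R (map A u) (map A [1..<Suc n]) \<longleftrightarrow> u = s"
proof -
  have subseq_iff: "subseq v [1..<Suc n] \<longleftrightarrow> index_coll_above 0 v" for v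
    using subseq_upt_iff[of v 0 n] by (simp add: index_coll_above_def)
  have coll_iff: "bounded_index_coll n v \<longleftrightarrow> index_coll_above 0 v" for v
    by (auto simp: bounded_index_coll_def index_coll_above_def Suc_le_eq)
  have "lexmax R (map A u) (map A [1..<Suc n]) \<longleftrightarrow>
      (\<exists>v. index_coll_above 0 v \<and> map A u = map A v) \<and>
      (\<forall>v. index_coll_above 0 v \<longrightarrow> lexle R (map A v) (map A u))"
    unfolding lexmax_def subseq_map_iff subseq_iff by blast
  then have "bounded_index_coll n u \<and> lexmax R (map A u) (map A [1..<Suc n]) \<longleftrightarrow>
      index_coll_above 0 u \<and> (\<forall>v. index_coll_above 0 v \<longrightarrow> lexle R (map A v) (map A u))"
    unfolding coll_iff by blast
  also have "\<dots> \<longleftrightarrow> u = s"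
    using s unfolding strict_max_above_def by blast
  finally show ?thesis .
qed

end

theorem lemma1:
  fixes n :: nat and A :: "nat \<Rightarrow> nat list"
  assumes "n \<ge> 1"
  shows "\<exists>s. (\<forall>s'. maximal_for n A s' \<longleftrightarrow> s' = s) \<and>
           (\<forall>t :: nat \<Rightarrow> nat.
              (t 0 = 0 \<and>
               (\<forall>k. t (Suc k) =
                  (if t k \<noteq> n
                   then Min {f. t k < f \<and> f \<le> n \<and> (\<forall>l. t k < l \<and> l \<le> n \<longrightarrow> wle (A l) (A f))}
                   else n)))
              \<longrightarrow> (\<exists>f\<ge>1. t f = n) \<and> s = map t [1..<Suc (LEAST f. 1 \<le> f \<and> t f = n)])"
proof -
  interpret greedy_max wle A n
    by unfold_locales (rule total_preorder_wle)
  obtain s where s: "strict_max_above 0 s"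
    using strict_max_above_exists by blast
  have "maximal_for n A s' \<longleftrightarrow> s' = s" for s'
    unfolding maximal_for_def by (rule lexmax_index_coll_iff[OF s])
  moreover have "(\<exists>f\<ge>1. t f = n) \<and> s = map t [1..<Suc (LEAST f. 1 \<le> f \<and> t f = n)]"
    if "t 0 = 0 \<and> (\<forall>k. t (Suc k) = (if t k \<noteq> n
          then Min {f. t k < f \<and> f \<le> n \<and> (\<forall>l. t k < l \<and> l \<le> n \<longrightarrow> wle (A l) (A f))} else n))"
    for t
  proof -
    from that have run: "greedy_run t" and "t 0 = 0"
      unfolding greedy_run_def greedy_step_def by auto
    with assms have "t 0 < n"
      by simp
    with run have "strict_max_above (t 0) (map t [1..<Suc (LEAST f. 1 \<le> f \<and> t f = n)])"
      by (rule greedy_run_strict_max(2))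
    with \<open>t 0 = 0\<close> have "map t [1..<Suc (LEAST f. 1 \<le> f \<and> t f = n)] = s"
      using strict_max_above_unique[OF s] by simp
    with greedy_run_strict_max(1)[OF run \<open>t 0 < n\<close>] show ?thesis
      by simp
  qed
  ultimately show ?thesis
    by blast
qed

end
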